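(* For every integer $i \ge 0$ and every integer $\nu \ge 0$, the following two identities hold: \[ \sum_{k=0}^{2\nu} (-1)^{k}\, \binom{2\nu+i}{k+i}\, 2^{-k}\, \binom{2k}{k} =\pi\,(2\nu+1)_{i}\,\frac{2^{2i}\, i!}{(2i)!}\,\sum_{r=0}^{i}\frac{2^{-r}\,\binom{i}{r}\, \left(\tfrac12+\tfrac12(i-r)\right)_{\nu}}{(i-r)!\,\Gamma^{2}\!\left(\tfrac12+\tfrac12(r-i)\right)\,\left(1+\tfrac12(i-r)\right)_{\nu}} \] and \[ \sum_{k=0}^{2\nu+1} (-1)^{k}\, \binom{2\nu+1+i}{k+i}\, 2^{-k}\, \binom{2k}{k} =2\pi\,(2\nu+2)_{i}\,\frac{2^{2i}\, i!}{(2i)!}\,\sum_{r=0}^{i}\frac{2^{-r}\,\binom{i}{r}\, \left(1+\tfrac12(i-r)\right)_{\nu}}{(i-r+1)!\,\Gamma^{2}\!\left(\tfrac12(r-i)\right)\,\left(\tfrac32+\tfrac12(i-r)\right)_{\nu}}. \]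
   Context: For a complex number $a$ and integer $n\ge 0$, $(a)_n$ denotes the Pochhammer symbol: $(a)_0=1$ and $(a)_n=a(a+1)\cdots(a+n-1)$ for $n\ge1$. $\Gamma$ is Euler's gamma function; whenever $\Gamma$ is evaluated at a non-positive integer in a denominator, the corresponding term is interpreted as $0$ (i.e. $1/\Gamma(-m)=0$ for integers $m\ge 0$). *)

theory Defs
  imports "HOL-Analysis.Analysis"
begin

end

theory Submission
  imports Defs
begin

(*
  Write F(n,i) for the left-hand sum with upper limit n (the two identities are the cases
  n = 2 nu and n = 2 nu + 1) and d_n for (n choose n/2) / 2^n, which is 0 for odd n.
  Pascal's rule, and a telescoping argument based on (k+1) a_(k+1) = (2k+1) a_k for
  a_k = (2k choose k) / 2^k, give the contiguous relations
    (2i+1) F(n,i+1) = (n+i+1) F(n,i) + (n+1) F(n+1,i),    F(n+1,i+1) = F(n+1,i) + F(n,i+1).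
  At i = 0 they force F(n,0) = d_n, and induction on i then gives
    F(n,i) = (n+1)_i 2^i i! / (2i)! * sum_(m<=i) (i choose m) d_(n+m).
  On the right-hand side, pi 2^m rGamma((1-m)/2)^2 = m! d_m, and the Pochhammer ratio carries
  d_m to d_(m+2 nu); so the r-th summand is (i choose r) d_(n+i-r) / (pi 2^i), with an extra
  factor 1/2 for odd n.
*)


lemma of_nat_Suc_times_binomial:
  "of_nat (Suc k) * of_nat (n choose Suc k)
     = (of_nat n - of_nat k) * (of_nat (n choose k) :: 'a::field_char_0)"
  unfolding binomial_gbinomial gbinomial_absorption gbinomial_absorb_comp ..

lemma Suc_times_central_binomial:
  "Suc k * ((2 * Suc k) choose Suc k) = 2 * (2 * k + 1) * ((2 * k) choose k)"
proof -
  have "Suc k * (Suc (Suc (2 * k)) choose Suc k) = Suc (Suc (2 * k)) * (Suc (2 * k) choose k)"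
    by (rule Suc_times_binomial)
  moreover have "(Suc (2 * k) - k) * (Suc (2 * k) choose k) = Suc (2 * k) * ((2 * k) choose k)"
    using binomial_absorb_comp[of "Suc (2 * k)" k] by simp
  ultimately show ?thesis
    by (simp add: Suc_diff_le algebra_simps)
qed

definition central_binomial_scaled :: "nat \<Rightarrow> real" where
  "central_binomial_scaled k = real ((2 * k) choose k) / 2 ^ k"

lemma Suc_times_central_binomial_scaled:
  "real (Suc k) * central_binomial_scaled (Suc k) = (2 * real k + 1) * central_binomial_scaled k"
proof -
  have "real (Suc k) * real ((2 * Suc k) choose Suc k) = 2 * ((2 * real k + 1) * real ((2 * k) choose k))"
    using arg_cong[OF Suc_times_central_binomial[of k], of real]
    by (simp del: binomial_Suc_Suc add: algebra_simps)
  then show ?thesis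
    unfolding central_binomial_scaled_def by (simp add: field_simps)
qed

definition alt_binomial_sum :: "nat \<Rightarrow> nat \<Rightarrow> real" where
  "alt_binomial_sum n i =
     (\<Sum>k=0..n. (-1)^k * real ((n+i) choose (k+i)) / 2^k * real ((2*k) choose k))"

lemma alt_binomial_sum_eq_lessThan:
  assumes "n < m"
  shows "alt_binomial_sum n i =
           (\<Sum>k<m. (-1)^k * central_binomial_scaled k * real ((n+i) choose (k+i)))"
proof -
  have "alt_binomial_sum n i = (\<Sum>k\<le>n. (-1)^k * central_binomial_scaled k * real ((n+i) choose (k+i)))"
    unfolding alt_binomial_sum_def central_binomial_scaled_def atLeast0AtMost by (simp add: mult_ac)
  also have "\<dots> = (\<Sum>k<m. (-1)^k * central_binomial_scaled k * real ((n+i) choose (k+i)))"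
    using assms by (intro sum.mono_neutral_left) auto
  finally show ?thesis .
qed

lemma alt_binomial_sum_pascal:
  "alt_binomial_sum (Suc n) (Suc i) = alt_binomial_sum (Suc n) i + alt_binomial_sum n (Suc i)"
  by (simp add: alt_binomial_sum_eq_lessThan[of _ "n + 2"] sum.distrib[symmetric] algebra_simps
      binomial_Suc_Suc[of "n + Suc i" "k + i" for k, simplified])

lemma alt_binomial_summand_telescoping:
  fixes N i k :: nat
  defines "u \<equiv> \<lambda>k. (-1)^k * central_binomial_scaled k * real (N choose (k + i))"
  shows "(real i - real k) * ((-1)^k * central_binomial_scaled k * real (N choose Suc (k + i)))
           - (real N - real i) * u k
         = real (Suc k) * u (Suc k) - real k * u k"
proof -
  define s where "s = (-1::real)^k * central_binomial_scaled k"
  define X where "X = real (N choose Suc (k + i))"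
  define Y where "Y = real (N choose (k + i))"
  have "real (Suc (k + i)) * X = (real N - real (k + i)) * Y"
    unfolding X_def Y_def by (rule of_nat_Suc_times_binomial)
  then have binomial_step: "(real k + real i + 1) * X = (real N - real i - real k) * Y"
    by (simp add: algebra_simps)
  have "real (Suc k) * u (Suc k) = - ((-1)^k * (real (Suc k) * central_binomial_scaled (Suc k)) * X)"
    unfolding u_def X_def by simp
  also have "\<dots> = - (2 * real k + 1) * s * X"
    unfolding Suc_times_central_binomial_scaled s_def by (simp add: algebra_simps)
  finally have "real (Suc k) * u (Suc k) - real k * u k = - (2 * real k + 1) * s * X - real k * s * Y"
    unfolding u_def s_def Y_def by simp
  also have "\<dots> = (real i - real k) * s * X - (real N - real i) * s * Y
                     - s * ((real k + real i + 1) * X - (real N - real i - real k) * Y)"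
    by (simp add: algebra_simps)
  also have "\<dots> = (real i - real k) * s * X - (real N - real i) * s * Y"
    unfolding binomial_step by simp
  finally show ?thesis
    unfolding u_def s_def X_def Y_def by (simp add: mult_ac)
qed

lemma alt_binomial_sum_contiguous:
  "(2 * real i + 1) * alt_binomial_sum n (Suc i)
     = (real n + real i + 1) * alt_binomial_sum n i + (real n + 1) * alt_binomial_sum (Suc n) i"
proof -
  define N where "N = Suc (n + i)"
  define t where "t k = (-1)^k * central_binomial_scaled k * real (N choose Suc (k + i))" for k
  define u where "u k = (-1)^k * central_binomial_scaled k * real (N choose (k + i))" for k
  have F_Suc_i: "alt_binomial_sum n (Suc i) = (\<Sum>k<n+2. t k)"
    by (simp add: alt_binomial_sum_eq_lessThan[of n "n+2"] t_def N_def)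
  have F_Suc_n: "alt_binomial_sum (Suc n) i = (\<Sum>k<n+2. u k)"
    by (simp add: alt_binomial_sum_eq_lessThan[of "Suc n" "n+2"] u_def N_def)
  have F: "(real n + real i + 1) * alt_binomial_sum n i = (\<Sum>k<n+2. (real k + real i + 1) * t k)"
  proof -
    have "(real n + real i + 1) * ((-1)^k * central_binomial_scaled k * real ((n + i) choose (k + i)))
            = (real k + real i + 1) * t k" for k
    proof -
      have "(real n + real i + 1) * real ((n + i) choose (k + i))
              = (real k + real i + 1) * real (N choose Suc (k + i))"
        using arg_cong[OF Suc_times_binomial[of "k + i" "n + i"], of real] unfolding N_def
        by (simp add: algebra_simps)
      then show ?thesis
        unfolding t_def by (metis mult.left_commute)
    qed
    moreover have "n < n + 2" by simp
    ultimately show ?thesis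
      by (simp only: alt_binomial_sum_eq_lessThan sum_distrib_left)
  qed
  have n_eq: "real n + 1 = real N - real i"
    by (simp add: N_def)
  have "(\<Sum>k<n+2. (real i - real k) * t k - (real n + 1) * u k)
               = (\<Sum>k<n+2. real (Suc k) * u (Suc k) - real k * u k)"
    unfolding t_def u_def n_eq by (intro sum.cong refl alt_binomial_summand_telescoping)
  also have "\<dots> = 0"
    by (subst sum_lessThan_telescope) (simp add: u_def N_def del: binomial_Suc_Suc)
  finally have telescoped: "(\<Sum>k<n+2. (real i - real k) * t k - (real n + 1) * u k) = 0" .
  have "(2 * real i + 1) * (\<Sum>k<n+2. t k) - (\<Sum>k<n+2. (real k + real i + 1) * t k)
          - (real n + 1) * (\<Sum>k<n+2. u k)
        = (\<Sum>k<n+2. (real i - real k) * t k - (real n + 1) * u k)"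
    unfolding sum_distrib_left sum_subtractf[symmetric] by (intro sum.cong) (simp_all add: algebra_simps)
  then show ?thesis
    unfolding F F_Suc_i F_Suc_n telescoped by simp
qed

(* (n choose n/2) / 2^n for even n and 0 for odd n: the probability that a simple random walk
   is back at the origin after n steps. *)
fun return_prob :: "nat \<Rightarrow> real" where
  "return_prob 0 = 1"
| "return_prob (Suc 0) = 0"
| "return_prob (Suc (Suc m)) = return_prob m * (real m + 1) / (real m + 2)"

lemma alt_binomial_sum_0: "alt_binomial_sum n 0 = return_prob n"
proof (induction n rule: return_prob.induct)
  case (3 m)
  have "alt_binomial_sum m 1 = (real m + 1) * (alt_binomial_sum m 0 + alt_binomial_sum (Suc m) 0)"
    using alt_binomial_sum_contiguous[of 0 m] by (simp add: algebra_simps)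
  moreover have "alt_binomial_sum (Suc m) 1
                   = (real m + 2) * (alt_binomial_sum (Suc m) 0 + alt_binomial_sum (Suc (Suc m)) 0)"
    using alt_binomial_sum_contiguous[of 0 "Suc m"] by (simp add: algebra_simps)
  moreover have "alt_binomial_sum (Suc m) 1 = alt_binomial_sum (Suc m) 0 + alt_binomial_sum m 1"
    using alt_binomial_sum_pascal[of m 0] by simp
  ultimately have "(real m + 2) * alt_binomial_sum (Suc (Suc m)) 0 = (real m + 1) * return_prob m"
    using "3" by (simp add: algebra_simps)
  then show ?case
    by (simp add: field_simps)
qed (simp_all add: alt_binomial_sum_def)

definition return_prob_binomial_sum :: "nat \<Rightarrow> nat \<Rightarrow> real" where
  "return_prob_binomial_sum n i = (\<Sum>m\<le>i. real (i choose m) * return_prob (n + m))"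

lemma return_prob_binomial_sum_pascal:
  "return_prob_binomial_sum n (Suc i) = return_prob_binomial_sum n i + return_prob_binomial_sum (Suc n) i"
proof -
  have "return_prob_binomial_sum n i = (\<Sum>m\<le>Suc i. real (i choose m) * return_prob (n + m))"
    unfolding return_prob_binomial_sum_def by simp
  then have shifted: "return_prob_binomial_sum n i
                        = return_prob n + (\<Sum>m\<le>i. real (i choose Suc m) * return_prob (n + Suc m))"
    unfolding sum.atMost_Suc_shift by simp
  have "return_prob_binomial_sum n (Suc i)
          = return_prob n + (\<Sum>m\<le>i. real (Suc i choose Suc m) * return_prob (n + Suc m))"
    unfolding return_prob_binomial_sum_def sum.atMost_Suc_shift by simp
  also have "\<dots> = return_prob_binomial_sum n i + return_prob_binomial_sum (Suc n) i"
    unfolding shifted by (simp add: return_prob_binomial_sum_def sum.distrib algebra_simps)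
  finally show ?thesis .
qed

definition closed_form_weight :: "nat \<Rightarrow> nat \<Rightarrow> real" where
  "closed_form_weight n i = pochhammer (real n + 1) i * 2^i * fact i / fact (2 * i)"

lemma closed_form_weight_Suc_right:
  "(2 * real i + 1) * closed_form_weight n (Suc i) = (real n + real i + 1) * closed_form_weight n i"
proof -
  have fact_double_Suc: "(fact (2 * Suc i) :: real) = (2 * real i + 2) * ((2 * real i + 1) * fact (2 * i))"
    by (simp add: algebra_simps)
  have fact_Suc_i: "(fact (Suc i) :: real) = (real i + 1) * fact i"
    by simp
  have nonzero: "(fact (2 * Suc i) :: real) \<noteq> 0" "(fact (2 * i) :: real) \<noteq> 0"
    by simp_all
  show ?thesis
    unfolding closed_form_weight_def times_divide_eq_right frac_eq_eq[OF nonzero]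
    unfolding pochhammer_Suc power_Suc fact_double_Suc fact_Suc_i by algebra
qed

lemma closed_form_weight_Suc_left:
  "(real n + 1) * closed_form_weight (Suc n) i = (real n + real i + 1) * closed_form_weight n i"
proof -
  have "(real n + 1) * pochhammer (real (Suc n) + 1) i = pochhammer (real n + 1) i * (real n + real i + 1)"
    using pochhammer_rec[of "real n + 1" i] pochhammer_Suc[of "real n + 1" i] by (simp add: algebra_simps)
  then show ?thesis
    unfolding closed_form_weight_def by (simp add: mult_ac times_divide_eq_right)
qed

lemma alt_binomial_sum_closed_form:
  "alt_binomial_sum n i = closed_form_weight n i * return_prob_binomial_sum n i"
proof (induction i arbitrary: n)
  case 0
  show ?case
    by (simp add: alt_binomial_sum_0 closed_form_weight_def return_prob_binomial_sum_def)
next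
  case (Suc i)
  have "(2 * real i + 1) * alt_binomial_sum n (Suc i)
          = (real n + real i + 1) * closed_form_weight n i * return_prob_binomial_sum n i
            + (real n + 1) * closed_form_weight (Suc n) i * return_prob_binomial_sum (Suc n) i"
    unfolding alt_binomial_sum_contiguous Suc by (simp add: algebra_simps)
  also have "\<dots> = (real n + real i + 1) * closed_form_weight n i * return_prob_binomial_sum n (Suc i)"
    unfolding closed_form_weight_Suc_left return_prob_binomial_sum_pascal by (simp add: algebra_simps)
  also have "\<dots> = (2 * real i + 1) * (closed_form_weight n (Suc i) * return_prob_binomial_sum n (Suc i))"
    unfolding closed_form_weight_Suc_right[symmetric] by (simp add: algebra_simps)
  finally show ?case
    by simp
qed

(* For odd m the argument (1 - m)/2 is a non-positive integer, where rGamma vanishes. *)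
lemma fact_times_return_prob:
  "fact m * return_prob m = pi * 2^m * rGamma ((1 - real m) / 2)^2"
proof (induction m rule: return_prob.induct)
  case 1
  show ?case
    by (simp add: rGamma_inverse_Gamma Gamma_one_half_real power_inverse)
next
  case 2
  show ?case
    by simp
next
  case (3 m)
  define x where "x = (1 - real (Suc (Suc m))) / 2"
  have x_plus_1: "x + 1 = (1 - real m) / 2"
    unfolding x_def by (simp add: field_simps)
  have "rGamma x ^ 2 = x^2 * rGamma ((1 - real m) / 2)^2"
    unfolding rGamma_plus1[of x, symmetric] x_plus_1 by (rule power_mult_distrib)
  also have "x^2 = (real m + 1)^2 / 4"
    unfolding x_def by (simp add: field_simps power2_eq_square)
  finally have "pi * 2 ^ Suc (Suc m) * rGamma x ^ 2 = (real m + 1)^2 * (fact m * return_prob m)"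
    unfolding "3" by simp
  also have "\<dots> = fact (Suc (Suc m)) * return_prob (Suc (Suc m))"
    by (simp add: field_simps power2_eq_square)
  finally show ?case
    unfolding x_def by simp
qed

lemma pochhammer_rGamma_return_prob:
  "pi * 2^m * pochhammer (1/2 + real m / 2) \<nu> * rGamma (1/2 - real m / 2)^2
     = fact m * pochhammer (1 + real m / 2) \<nu> * return_prob (2 * \<nu> + m)"
proof (induction \<nu>)
  case 0
  have half: "1/2 - real m / 2 = (1 - real m) / 2"
    by (simp add: field_simps)
  show ?case
    unfolding half using fact_times_return_prob[of m] by simp
next
  case (Suc \<nu>)
  have "2 * Suc \<nu> + m = Suc (Suc (2 * \<nu> + m))"
    by simp
  then have step: "(1/2 + real m / 2 + real \<nu>) * return_prob (2 * \<nu> + m)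
                     = (1 + real m / 2 + real \<nu>) * return_prob (2 * Suc \<nu> + m)"
    by (simp add: field_simps)
  have "pi * 2^m * pochhammer (1/2 + real m / 2) (Suc \<nu>) * rGamma (1/2 - real m / 2)^2
          = (pi * 2^m * pochhammer (1/2 + real m / 2) \<nu> * rGamma (1/2 - real m / 2)^2)
            * (1/2 + real m / 2 + real \<nu>)"
    by (simp add: pochhammer_Suc mult_ac)
  also have "\<dots> = fact m * pochhammer (1 + real m / 2) \<nu>
                     * ((1/2 + real m / 2 + real \<nu>) * return_prob (2 * \<nu> + m))"
    unfolding Suc.IH by (simp only: mult_ac)
  also have "\<dots> = fact m * pochhammer (1 + real m / 2) (Suc \<nu>) * return_prob (2 * Suc \<nu> + m)"
    unfolding step by (simp add: pochhammer_Suc mult_ac)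
  finally show ?case .
qed

corollary pochhammer_ratio_return_prob:
  "pochhammer (1/2 + real m / 2) \<nu> / (fact m * pochhammer (1 + real m / 2) \<nu>)
     * rGamma (1/2 - real m / 2)^2
     = return_prob (2 * \<nu> + m) / (pi * 2^m)"
proof -
  have "pochhammer (1 + real m / 2) \<nu> > 0"
    by (rule pochhammer_pos) simp
  then show ?thesis
    using pochhammer_rGamma_return_prob[of m \<nu>] by (simp add: field_simps)
qed

lemma sum_binomial_reflect:
  "(\<Sum>r=0..i. of_nat (i choose r) * f (i - r))
     = (\<Sum>m\<le>i. of_nat (i choose m) * (f m :: 'a::semiring_1))"
proof -
  have "(\<Sum>r=0..i. of_nat (i choose r) * f (i - r)) = (\<Sum>r=0..i. of_nat (i choose (i - r)) * f r)"
    by (subst sum.atLeastAtMost_rev) (auto intro!: sum.cong simp flip: binomial_symmetric)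
  also have "\<dots> = (\<Sum>m\<le>i. of_nat (i choose m) * f m)"
    unfolding atLeast0AtMost by (auto intro!: sum.cong simp flip: binomial_symmetric)
  finally show ?thesis .
qed

lemma binomial_sum_pochhammer_ratio:
  "(\<Sum>r=0..i. (1/2)^r * real (i choose r) * pochhammer (1/2 + real (i - r + p) / 2) \<nu>
      / (fact (i - r + p) * pochhammer (1 + real (i - r + p) / 2) \<nu>)
      * rGamma (1/2 - real (i - r + p) / 2)^2)
     = return_prob_binomial_sum (2 * \<nu> + p) i / (pi * 2^(i + p))" (is "?lhs = _")
proof -
  have summand: "(1/2)^r * real (i choose r) * pochhammer (1/2 + real (i - r + p) / 2) \<nu>
                   / (fact (i - r + p) * pochhammer (1 + real (i - r + p) / 2) \<nu>)
                   * rGamma (1/2 - real (i - r + p) / 2)^2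
                 = real (i choose r) * return_prob (2 * \<nu> + p + (i - r)) / (pi * 2^(i + p))"
    if "r \<le> i" for r
  proof -
    define m where "m = i - r + p"
    have "(1/2)^r * real (i choose r) * pochhammer (1/2 + real m / 2) \<nu>
            / (fact m * pochhammer (1 + real m / 2) \<nu>) * rGamma (1/2 - real m / 2)^2
          = (1/2)^r * real (i choose r) * (return_prob (2 * \<nu> + m) / (pi * 2^m))"
      unfolding pochhammer_ratio_return_prob[symmetric] by simp
    also have "\<dots> = real (i choose r) * return_prob (2 * \<nu> + p + (i - r)) / (pi * 2^(i + p))"
      using that by (simp add: m_def power_add field_simps flip: power_add)
    finally show ?thesis
      unfolding m_def .
  qed
  then have "?lhs = (\<Sum>r=0..i. real (i choose r) * return_prob (2 * \<nu> + p + (i - r))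
                                  / (pi * 2^(i + p)))"
    by (intro sum.cong) simp_all
  also have "\<dots> = return_prob_binomial_sum (2 * \<nu> + p) i / (pi * 2^(i + p))"
    unfolding sum_divide_distrib[symmetric] return_prob_binomial_sum_def
      sum_binomial_reflect[of i "\<lambda>m. return_prob (2 * \<nu> + p + m)"] ..
  finally show ?thesis .
qed

corollary even_rhs_sum:
  "(\<Sum>r=0..i. (1/2)^r * real (i choose r) * pochhammer (1/2 + (real i - real r)/2) \<nu>
      / (fact (i-r) * pochhammer (1 + (real i - real r)/2) \<nu>) * (rGamma (1/2 + (real r - real i)/2))^2)
     = return_prob_binomial_sum (2 * \<nu>) i / (pi * 2^i)"
proof -
  have half_eq: "1/2 - (x - y) / 2 = 1/2 + (y - x) / 2" for x y :: real
    by (simp add: field_simps)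
  show ?thesis
    unfolding binomial_sum_pochhammer_ratio[of i 0 \<nu>, unfolded add_0_right, symmetric]
    by (intro sum.cong refl) (simp only: atLeastAtMost_iff of_nat_diff half_eq)
qed

corollary odd_rhs_sum:
  "(\<Sum>r=0..i. (1/2)^r * real (i choose r) * pochhammer (1 + (real i - real r)/2) \<nu>
      / (fact (i-r+1) * pochhammer (3/2 + (real i - real r)/2) \<nu>) * (rGamma ((real r - real i)/2))^2)
     = return_prob_binomial_sum (2 * \<nu> + 1) i / (2 * pi * 2^i)"
proof -
  have half_eqs: "1/2 + (x - y + 1) / 2 = 1 + (x - y) / 2" "1 + (x - y + 1) / 2 = 3/2 + (x - y) / 2"
    "1/2 - (x - y + 1) / 2 = (y - x) / 2" for x y :: real
    by (simp_all add: field_simps)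
  have denominator: "2 * pi * 2^i = pi * 2 ^ (i + 1)"
    by simp
  show ?thesis
    unfolding denominator binomial_sum_pochhammer_ratio[of i 1 \<nu>, symmetric]
    by (intro sum.cong refl) (simp only: atLeastAtMost_iff of_nat_add of_nat_1 of_nat_diff half_eqs)
qed

theorem theorem2p1:
  fixes i \<nu> :: nat
  shows "(\<Sum>k=0..2*\<nu>. (-1)^k * real ((2*\<nu>+i) choose (k+i)) / 2^k * real ((2*k) choose k))
           = pi * pochhammer (real (2*\<nu>+1)) i * 2^(2*i) * fact i / fact (2*i) *
             (\<Sum>r=0..i. (1/2)^r * real (i choose r) * pochhammer (1/2 + (real i - real r)/2) \<nu>
                 / (fact (i-r) * pochhammer (1 + (real i - real r)/2) \<nu>)
                 * (rGamma (1/2 + (real r - real i)/2))^2)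
       \<and> (\<Sum>k=0..2*\<nu>+1. (-1)^k * real ((2*\<nu>+1+i) choose (k+i)) / 2^k * real ((2*k) choose k))
           = 2 * pi * pochhammer (real (2*\<nu>+2)) i * 2^(2*i) * fact i / fact (2*i) *
             (\<Sum>r=0..i. (1/2)^r * real (i choose r) * pochhammer (1 + (real i - real r)/2) \<nu>
                 / (fact (i-r+1) * pochhammer (3/2 + (real i - real r)/2) \<nu>)
                 * (rGamma ((real r - real i)/2))^2)"
proof -
  have "(2::real) ^ (2 * i) = 2^i * 2^i"
    unfolding mult_2 power_add ..
  moreover have "real (2 * \<nu> + 2) = real (2 * \<nu> + 1) + 1"
    by simp
  ultimately show ?thesis
    unfolding alt_binomial_sum_def[of "2*\<nu>" i, symmetric]
      alt_binomial_sum_def[of "2*\<nu>+1" i, symmetric] even_rhs_sum odd_rhs_sum alt_binomial_sum_closed_form closed_form_weight_def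
    by (simp add: field_simps)
qed

end
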